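(* Every easy pair of words $(x,y)$ over a finite alphabet $\Sigma$ can be separated exactly by a 2-state MCQFA with real amplitudes.
   Context: A pair of words $(x,y)$ means two different words over the same finite alphabet $\Sigma$. It is easy if there is $\sigma\in\Sigma$ with $|x|_\sigma\neq|y|_\sigma$, where $|w|_\sigma$ is the number of occurrences of $\sigma$ in $w$; otherwise it is hard. An $n$-state Moore–Crutchfield quantum finite automaton (MCQFA) over $\Sigma$ consists of states $q_1,\dots,q_n$ (identified with the standard basis vectors of $\mathbb{C}^n$), a unitary matrix $U_\sigma\in\mathbb{C}^{n\times n}$ for each $\sigma\in\Sigma$, an initial unit vector $|u_0\rangle\in\mathbb{C}^n$, and a set $Q_a$ of accepting states. On input $w=w_1\cdots w_k$ the final state is $|u_f^w\rangle=U_{w_k}\cdots U_{w_1}|u_0\rangle$ and $w$ is accepted with probability $\sum_{q_j\in Q_a}|\langle q_j|u_f^w\rangle|^2$. It has real amplitudes if all $U_\sigma$ and $|u_0\rangle$ are real. A pair $(x,y)$ is separated exactly if one word is accepted with probability $1$ and the other with probability $0$. *)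

theory Defs
  imports "Jordan_Normal_Form.Matrix"
begin

text \<open>Words over an alphabet of type 'a are lists; |w|_s = count_list w s.\<close>

definition easy_pair :: "'a list \<Rightarrow> 'a list \<Rightarrow> bool" where
  "easy_pair x y \<longleftrightarrow> x \<noteq> y \<and> (\<exists>s. count_list x s \<noteq> count_list y s)"

definition unitary_mat :: "nat \<Rightarrow> complex mat \<Rightarrow> bool" where
  "unitary_mat n U \<longleftrightarrow> U \<in> carrier_mat n n \<and>
     mat n n (\<lambda>(i,j). cnj (U $$ (j,i))) * U = 1\<^sub>m n"

definition unit_vec_c :: "nat \<Rightarrow> complex vec \<Rightarrow> bool" where
  "unit_vec_c n v \<longleftrightarrow> v \<in> carrier_vec n \<and> (\<Sum>i<n. (cmod (v $ i))^2) = 1"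

text \<open>An n-state MCQFA: states q_1..q_n are indices 0..n-1; U s is the unitary for
  letter s, u0 the initial unit vector, Qa the set of accepting states.\<close>
definition is_mcqfa :: "nat \<Rightarrow> ('a \<Rightarrow> complex mat) \<Rightarrow> complex vec \<Rightarrow> nat set \<Rightarrow> bool" where
  "is_mcqfa n U u0 Qa \<longleftrightarrow> (\<forall>s. unitary_mat n (U s)) \<and> unit_vec_c n u0 \<and> Qa \<subseteq> {..<n}"

text \<open>Final state U_{w_k} ... U_{w_1} u0 (the first letter is applied first).\<close>
definition final_state :: "('a \<Rightarrow> complex mat) \<Rightarrow> complex vec \<Rightarrow> 'a list \<Rightarrow> complex vec" where
  "final_state U u0 w = fold (\<lambda>s v. U s *\<^sub>v v) w u0"

definition acc_prob :: "('a \<Rightarrow> complex mat) \<Rightarrow> complex vec \<Rightarrow> nat set \<Rightarrow> 'a list \<Rightarrow> real" where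
  "acc_prob U u0 Qa w = (\<Sum>j\<in>Qa. (cmod (final_state U u0 w $ j))^2)"

definition real_amplitudes :: "nat \<Rightarrow> ('a \<Rightarrow> complex mat) \<Rightarrow> complex vec \<Rightarrow> bool" where
  "real_amplitudes n U u0 \<longleftrightarrow>
     (\<forall>s i j. i < n \<longrightarrow> j < n \<longrightarrow> Im (U s $$ (i,j)) = 0) \<and> (\<forall>i<n. Im (u0 $ i) = 0)"

definition separates_exactly ::
  "('a \<Rightarrow> complex mat) \<Rightarrow> complex vec \<Rightarrow> nat set \<Rightarrow> 'a list \<Rightarrow> 'a list \<Rightarrow> bool" where
  "separates_exactly U u0 Qa x y \<longleftrightarrow>
     (acc_prob U u0 Qa x = 1 \<and> acc_prob U u0 Qa y = 0) \<or>
     (acc_prob U u0 Qa x = 0 \<and> acc_prob U u0 Qa y = 1)"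

end

theory Submission
  imports Defs
begin

text \<open>Let \<open>c\<close> be a letter with \<open>|x|\<^sub>c = a \<noteq> b = |y|\<^sub>c\<close>. A two-state automaton in which
  \<open>c\<close> rotates the real plane by \<open>\<theta> = \<pi> / (2(a - b))\<close> and every other letter acts as the
  identity maps the start vector at angle \<open>t\<close> to the vector at angle \<open>t + \<theta> |w|\<^sub>c\<close>.
  Starting at \<open>t = -b\<theta>\<close>, the word \<open>y\<close> ends at angle \<open>0\<close> and \<open>x\<close> at angle \<open>\<pi>/2\<close>, so
  accepting in the first state separates them exactly.\<close>

definition rotation_mat :: "real \<Rightarrow> complex mat" where
  "rotation_mat a = mat 2 2 (\<lambda>(i,j).
     if i = 0 then (if j = 0 then complex_of_real (cos a) else - complex_of_real (sin a))
     else (if j = 0 then complex_of_real (sin a) else complex_of_real (cos a)))"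

definition angle_vec :: "real \<Rightarrow> complex vec" where
  "angle_vec t = vec 2 (\<lambda>i. if i = 0 then complex_of_real (cos t) else complex_of_real (sin t))"

definition count_rotation :: "'a \<Rightarrow> real \<Rightarrow> 'a \<Rightarrow> complex mat" where
  "count_rotation c \<theta> s = rotation_mat (if s = c then \<theta> else 0)"

lemma sum_lessThan_2: "(\<Sum>i<2. f i) = f 0 + f (Suc 0)"
  by (simp add: numeral_2_eq_2)

lemma rotation_mat_mult_angle_vec: "rotation_mat a *\<^sub>v angle_vec t = angle_vec (t + a)"
proof (rule eq_vecI)
  fix i assume "i < dim_vec (angle_vec (t + a))"
  then have i: "i < 2" by (simp add: angle_vec_def)
  have "(rotation_mat a *\<^sub>v angle_vec t) $ i = (\<Sum>k<2. rotation_mat a $$ (i,k) * angle_vec t $ k)"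
    using i by (simp add: rotation_mat_def angle_vec_def mult_mat_vec_def scalar_prod_def
        atLeast0LessThan)
  also have "\<dots> = angle_vec (t + a) $ i"
    using i by (auto simp: sum_lessThan_2 rotation_mat_def angle_vec_def cos_add sin_add
        less_2_cases_iff algebra_simps)
  finally show "(rotation_mat a *\<^sub>v angle_vec t) $ i = angle_vec (t + a) $ i" .
qed (simp add: rotation_mat_def angle_vec_def)

lemma unitary_rotation_mat: "unitary_mat 2 (rotation_mat a)"
  unfolding unitary_mat_def
proof
  show "rotation_mat a \<in> carrier_mat 2 2" by (simp add: rotation_mat_def)
  show "mat 2 2 (\<lambda>(i, j). cnj (rotation_mat a $$ (j, i))) * rotation_mat a = 1\<^sub>m 2"
  proof (rule eq_matI)
    fix i j assume "i < dim_row (1\<^sub>m 2)" "j < dim_col (1\<^sub>m 2)"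
    then have i: "i < 2" and j: "j < 2" by auto
    have cos_sin: "complex_of_real (cos a) * complex_of_real (cos a)
        + complex_of_real (sin a) * complex_of_real (sin a) = 1"
      by (metis of_real_1 of_real_add of_real_mult sin_cos_squared_add3)
    have "(mat 2 2 (\<lambda>(i, j). cnj (rotation_mat a $$ (j, i))) * rotation_mat a) $$ (i,j)
        = (\<Sum>k<2. cnj (rotation_mat a $$ (k, i)) * rotation_mat a $$ (k,j))"
      using i j by (simp add: rotation_mat_def times_mat_def scalar_prod_def atLeast0LessThan)
    also have "\<dots> = 1\<^sub>m 2 $$ (i,j)"
      using i j cos_sin
      by (auto simp: sum_lessThan_2 rotation_mat_def less_2_cases_iff algebra_simps)
    finally show "(mat 2 2 (\<lambda>(i, j). cnj (rotation_mat a $$ (j, i))) * rotation_mat a) $$ (i,j)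
        = 1\<^sub>m 2 $$ (i,j)" .
  qed (auto simp: rotation_mat_def)
qed

lemma final_state_count_rotation:
  "final_state (count_rotation c \<theta>) (angle_vec t) w = angle_vec (t + \<theta> * count_list w c)"
  unfolding final_state_def
proof (induction w arbitrary: t)
  case (Cons s w)
  show ?case
    using Cons[of "t + (if s = c then \<theta> else 0)"]
    by (simp add: count_rotation_def rotation_mat_mult_angle_vec algebra_simps)
qed simp

lemma acc_prob_count_rotation:
  "acc_prob (count_rotation c \<theta>) (angle_vec t) {0} w = (cos (t + \<theta> * count_list w c))\<^sup>2"
  unfolding acc_prob_def final_state_count_rotation by (simp add: angle_vec_def)

lemma is_mcqfa_count_rotation: "is_mcqfa 2 (count_rotation c \<theta>) (angle_vec t) {0}"
  unfolding is_mcqfa_def unit_vec_c_def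
  by (auto simp: count_rotation_def unitary_rotation_mat angle_vec_def sum_lessThan_2)

lemma real_amplitudes_count_rotation: "real_amplitudes 2 (count_rotation c \<theta>) (angle_vec t)"
  unfolding real_amplitudes_def
  by (auto simp: count_rotation_def rotation_mat_def angle_vec_def)

theorem mainTheorem2:
  fixes x y :: "'a::finite list"
  assumes "easy_pair x y"
  shows "\<exists>(U :: 'a \<Rightarrow> complex mat) (u0 :: complex vec) (Qa :: nat set).
           is_mcqfa 2 U u0 Qa \<and> real_amplitudes 2 U u0 \<and> separates_exactly U u0 Qa x y"
proof -
  obtain c where c: "count_list x c \<noteq> count_list y c"
    using assms unfolding easy_pair_def by blast
  define a where "a = real (count_list x c)"
  define b where "b = real (count_list y c)"
  define \<theta> where "\<theta> = pi / (2 * (a - b))"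
  have "a - b \<noteq> 0" using c by (simp add: a_def b_def)
  have x_angle: "- b * \<theta> + \<theta> * count_list x c = pi / 2"
  proof -
    have "- b * \<theta> + \<theta> * count_list x c = (a - b) * \<theta>"
      by (simp add: a_def[symmetric] algebra_simps)
    also have "\<dots> = pi / 2"
      using \<open>a - b \<noteq> 0\<close> by (simp add: \<theta>_def divide_simps)
    finally show ?thesis .
  qed
  have y_angle: "- b * \<theta> + \<theta> * count_list y c = 0"
    by (simp add: b_def[symmetric])
  have "separates_exactly (count_rotation c \<theta>) (angle_vec (- b * \<theta>)) {0} x y"
    unfolding separates_exactly_def acc_prob_count_rotation x_angle y_angle by simp
  then show ?thesis
    using is_mcqfa_count_rotation real_amplitudes_count_rotation by metis
qed

end
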